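(* Let $n\ge1$, $N\ge3$, $m=n+N$, let $u>0$ solve $\partial_tu=\Delta_xu$ on $\mathbb{R}^n\times(0,\infty)$ with $u=t^{-n/2}e^{-f}$, fix $0<\tau_1<\tau_2$ and assume $f$ and all of its partial derivatives in $x,t$ are bounded on $\mathbb{R}^n\times[\tau_1,\tau_2]$. Let $v,b,B$ be as in the context and, at $(x,y)$, set $\tau=\frac{|y|^2}{2N}\in[\tau_1,\tau_2]$. Then, in block form with respect to $\mathbb{R}^m=\mathbb{R}^n\times\mathbb{R}^N$, \[ \mathrm{Hess}(b^2)(x,y)=\frac{2b^2}{N}\Big(\mathrm{Hess}_xf(x,\tau)\oplus\frac{1}{2\tau}I_N+O(N^{-1/2})\,Q_1+O(N^{-1})\,Q_2\Big), \] where $\mathrm{Hess}_xf(x,\tau)$ occupies the $n\times n$ block and $\frac1{2\tau}I_N$ the $N\times N$ block, $Q_1$ is a matrix supported in the off-diagonal blocks and $Q_2$ a matrix supported in the two diagonal blocks, with entries bounded independently of $N$. Moreover \[ |B|^2=\frac{4b^4}{N^2}\Big(\Big|\mathrm{Hess}_xf(x,\tau)-\frac{1}{2\tau}I_n\Big|^2+O(N^{-1})\Big). \] Here the $O(\cdot)$ constants do not depend on $N,x,y$.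
   Context: $\mathbb{R}^m=\mathbb{R}^n\times\mathbb{R}^N$, points $(x,y)$, $r=|y|$; $\mathrm{Hess}$ and $\Delta$ are Euclidean on $\mathbb{R}^m$, $\mathrm{Hess}_x$ is the Hessian in $x$. $v(x,y)=r^{2-m}\exp(-f(x,\tfrac{r^2}{2N}))$, $b=v^{1/(2-m)}$, $B=\mathrm{Hess}(b^2)-\frac{\Delta b^2}{m}I_m$, $|\cdot|^2$ the squared Hilbert–Schmidt norm. *)

theory Defs
  imports "HOL-Analysis.Analysis"
begin

text \<open>Points of R^k are represented as functions nat => real vanishing at indices >= k.
  For R^m = R^n x R^N, coordinates 0..n-1 are x, coordinates n..n+N-1 are y.\<close>

definition Rvec :: "nat \<Rightarrow> (nat \<Rightarrow> real) set" where
  "Rvec k = {z. \<forall>i\<ge>k. z i = 0}"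

definition pdx :: "nat \<Rightarrow> ((nat \<Rightarrow> real) \<Rightarrow> real \<Rightarrow> real) \<Rightarrow> (nat \<Rightarrow> real) \<Rightarrow> real \<Rightarrow> real" where
  "pdx i g x t = deriv (\<lambda>s. g (x(i := x i + s)) t) 0"

definition pdt :: "((nat \<Rightarrow> real) \<Rightarrow> real \<Rightarrow> real) \<Rightarrow> (nat \<Rightarrow> real) \<Rightarrow> real \<Rightarrow> real" where
  "pdt g x t = deriv (\<lambda>s. g x s) t"

datatype dir = DX nat | DT

fun dop :: "dir \<Rightarrow> ((nat \<Rightarrow> real) \<Rightarrow> real \<Rightarrow> real) \<Rightarrow> (nat \<Rightarrow> real) \<Rightarrow> real \<Rightarrow> real" where
  "dop (DX i) = pdx i"
| "dop DT = pdt"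

fun pd :: "dir list \<Rightarrow> ((nat \<Rightarrow> real) \<Rightarrow> real \<Rightarrow> real) \<Rightarrow> (nat \<Rightarrow> real) \<Rightarrow> real \<Rightarrow> real" where
  "pd [] g = g"
| "pd (d # ds) g = dop d (pd ds g)"

definition dir_ok :: "nat \<Rightarrow> dir \<Rightarrow> bool" where
  "dir_ok n d = (case d of DX i \<Rightarrow> i < n | DT \<Rightarrow> True)"

definition all_partials_exist :: "nat \<Rightarrow> ((nat \<Rightarrow> real) \<Rightarrow> real \<Rightarrow> real) \<Rightarrow> bool" where
  "all_partials_exist n g \<longleftrightarrow>
     (\<forall>ds d x t. list_all (dir_ok n) (d # ds) \<longrightarrow> x \<in> Rvec n \<longrightarrow> t > 0 \<longrightarrow>
        (case d of
           DX i \<Rightarrow> (\<lambda>s. pd ds g (x(i := x i + s)) t) differentiable (at 0)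
         | DT \<Rightarrow> (\<lambda>s. pd ds g x s) differentiable (at t)))"

definition rad :: "nat \<Rightarrow> nat \<Rightarrow> (nat \<Rightarrow> real) \<Rightarrow> real" where
  "rad n N z = sqrt (\<Sum>j<N. (z (n + j))^2)"

definition xpart :: "nat \<Rightarrow> (nat \<Rightarrow> real) \<Rightarrow> (nat \<Rightarrow> real)" where
  "xpart n z = (\<lambda>i. if i < n then z i else 0)"

definition vfun :: "nat \<Rightarrow> nat \<Rightarrow> ((nat \<Rightarrow> real) \<Rightarrow> real \<Rightarrow> real) \<Rightarrow> (nat \<Rightarrow> real) \<Rightarrow> real" where
  "vfun n N f z = rad n N z powr (2 - real (n + N))
      * exp (- f (xpart n z) ((rad n N z)^2 / (2 * real N)))"

definition bfun :: "nat \<Rightarrow> nat \<Rightarrow> ((nat \<Rightarrow> real) \<Rightarrow> real \<Rightarrow> real) \<Rightarrow> (nat \<Rightarrow> real) \<Rightarrow> real" where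
  "bfun n N f z = vfun n N f z powr (1 / (2 - real (n + N)))"

definition pdz :: "nat \<Rightarrow> ((nat \<Rightarrow> real) \<Rightarrow> real) \<Rightarrow> (nat \<Rightarrow> real) \<Rightarrow> real" where
  "pdz k g z = deriv (\<lambda>s. g (z(k := z k + s))) 0"

definition hessz :: "((nat \<Rightarrow> real) \<Rightarrow> real) \<Rightarrow> (nat \<Rightarrow> real) \<Rightarrow> nat \<Rightarrow> nat \<Rightarrow> real" where
  "hessz g z k l = pdz k (pdz l g) z"

definition lapz :: "nat \<Rightarrow> ((nat \<Rightarrow> real) \<Rightarrow> real) \<Rightarrow> (nat \<Rightarrow> real) \<Rightarrow> real" where
  "lapz m g z = (\<Sum>k<m. hessz g z k k)"

definition Bmat :: "nat \<Rightarrow> nat \<Rightarrow> ((nat \<Rightarrow> real) \<Rightarrow> real \<Rightarrow> real) \<Rightarrow> (nat \<Rightarrow> real) \<Rightarrow> nat \<Rightarrow> nat \<Rightarrow> real" where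
  "Bmat n N f z k l =
     hessz (\<lambda>w. (bfun n N f w)^2) z k l
     - (if k = l then lapz (n + N) (\<lambda>w. (bfun n N f w)^2) z / real (n + N) else 0)"

definition Bnorm2 :: "nat \<Rightarrow> nat \<Rightarrow> ((nat \<Rightarrow> real) \<Rightarrow> real \<Rightarrow> real) \<Rightarrow> (nat \<Rightarrow> real) \<Rightarrow> real" where
  "Bnorm2 n N f z = (\<Sum>k<n+N. \<Sum>l<n+N. (Bmat n N f z k l)^2)"

definition M0 :: "nat \<Rightarrow> ((nat \<Rightarrow> real) \<Rightarrow> real \<Rightarrow> real) \<Rightarrow> (nat \<Rightarrow> real) \<Rightarrow> real \<Rightarrow> nat \<Rightarrow> nat \<Rightarrow> real" where
  "M0 n f x \<tau> k l =
     (if k < n \<and> l < n then pdx k (pdx l f) x \<tau>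
      else if n \<le> k \<and> n \<le> l then (if k = l then 1 / (2 * \<tau>) else 0)
      else 0)"

end

theory Submission
  imports Defs
begin

(* With a = 2/(m-2) one has b^2 = |y|^2 exp (a f(x, |y|^2/2N)), so Hess(b^2) follows from the
   chain rule applied coordinatewise.  Normalised by 2 b^2/N it is the block matrix
     [[Hess_x f + D, alpha y^T], [y beta^T, (1/(2 tau) + gamma) I + nu y y^T]]
   in which D, alpha, beta, gamma and nu |y|^2 are all O(1/N): this is because N a = 2 + O(1/N)
   and |y|^2 = 2 N tau.  Since |y_j| <= sqrt (2 N tau), the entries are then within O(1/N) of the
   leading matrix on the diagonal blocks and within O(N^(-1/2)) off them.  For |B|^2 entrywise
   bounds are not enough, as there are about N^2 entries; what saves the estimate is the rank-one
   structure of the perturbation, whose off-diagonal blocks have squared norm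
   |y|^2 |alpha|^2 = O(1/N) and whose y-block contributes
   N gamma^2 + 2 gamma nu |y|^2 + (nu |y|^2)^2 = O(1/N). *)

lemma abs_mult_le: "\<bar>x\<bar> \<le> a \<Longrightarrow> \<bar>y\<bar> \<le> b \<Longrightarrow> \<bar>x * y\<bar> \<le> a * b"
  for x y a b :: real
  by (simp add: abs_mult mult_mono')

lemma abs_add3_le:
  "\<bar>x\<bar> \<le> a \<Longrightarrow> \<bar>y\<bar> \<le> b \<Longrightarrow> \<bar>z\<bar> \<le> d \<Longrightarrow> \<bar>x + y + z\<bar> \<le> a + b + d"
  for x y z a b d :: real
  by linarith

lemma square_le_of_abs_le: "\<bar>x\<bar> \<le> e \<Longrightarrow> x\<^sup>2 \<le> e\<^sup>2"
  for x e :: real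
  using power_mono[OF _ abs_ge_zero, of x e 2] by simp

lemma le_square_le_cube:
  fixes K :: real
  assumes "1 \<le> K"
  shows "K \<le> K * K" "K * K \<le> K ^ 3"
  using assms by (auto simp: power3_eq_cube mult_le_cancel_left1 intro: mult_right_mono)

lemma abs_sum_lessThan_le:
  fixes g :: "nat \<Rightarrow> real"
  assumes "\<And>i. i < n \<Longrightarrow> \<bar>g i\<bar> \<le> B"
  shows "\<bar>\<Sum>i<n. g i\<bar> \<le> real n * B"
  using order_trans[OF sum_abs sum_bounded_above[of "{..<n}" "\<lambda>i. \<bar>g i\<bar>" B]] assms by simp

section \<open>Functions of x and |y|^2\<close>

definition rsq :: "nat \<Rightarrow> nat \<Rightarrow> (nat \<Rightarrow> real) \<Rightarrow> real" where
  "rsq n N w = (\<Sum>j<N. (w (n + j))\<^sup>2)"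

definition pullback :: "nat \<Rightarrow> nat \<Rightarrow> ((nat \<Rightarrow> real) \<Rightarrow> real \<Rightarrow> real) \<Rightarrow> (nat \<Rightarrow> real) \<Rightarrow> real" where
  "pullback n N g w = g (xpart n w) (rsq n N w / (2 * real N))"

(* By the chain rule, these are the first and second partial derivatives of
   w \<mapsto> pd ds f (xpart n w) (rsq n N w / (2 N)) in the coordinates k, and k and l. *)
definition pullback_pd ::
    "nat \<Rightarrow> nat \<Rightarrow> dir list \<Rightarrow> ((nat \<Rightarrow> real) \<Rightarrow> real \<Rightarrow> real) \<Rightarrow> nat \<Rightarrow> (nat \<Rightarrow> real) \<Rightarrow> real" where
  "pullback_pd n N ds f k w =
     (if k < n then pullback n N (pd (DX k # ds) f) w
      else w k / real N * pullback n N (pd (DT # ds) f) w)"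

definition pullback_pd2 ::
    "nat \<Rightarrow> nat \<Rightarrow> dir list \<Rightarrow> ((nat \<Rightarrow> real) \<Rightarrow> real \<Rightarrow> real) \<Rightarrow> nat \<Rightarrow> nat \<Rightarrow> (nat \<Rightarrow> real) \<Rightarrow> real" where
  "pullback_pd2 n N ds f k l w =
     (if l < n then pullback_pd n N (DX l # ds) f k w
      else (if k = l then pullback n N (pd (DT # ds) f) w / real N else 0)
         + w l / real N * pullback_pd n N (DT # ds) f k w)"

lemma rsq_nonneg: "0 \<le> rsq n N w"
  unfolding rsq_def by (simp add: sum_nonneg)

lemma rad_squared: "(rad n N w)\<^sup>2 = rsq n N w"
  unfolding rad_def rsq_def by (simp add: sum_nonneg)

lemma rsq_pos_imp_pos: "0 < rsq n N w \<Longrightarrow> 0 < N"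
  unfolding rsq_def by (cases N) auto

lemma bfun_squared:
  assumes "n + N \<noteq> 2"
  shows "(bfun n N f w)\<^sup>2 = rsq n N w * exp (2 / (real (n + N) - 2) * pullback n N f w)"
proof (cases "rad n N w = 0")
  case True
  then show ?thesis
    using rad_squared[of n N w] by (simp add: bfun_def vfun_def)
next
  case False
  define r where "r = rad n N w"
  define e where "e = 1 / (2 - real (n + N))"
  have r: "0 < r" using False by (simp add: r_def rad_def sum_nonneg order.strict_iff_order)
  have e: "e * (2 - real (n + N)) = 1" using assms by (simp add: e_def)
  have "bfun n N f w = (r powr (2 - real (n + N))) powr e * exp (- pullback n N f w) powr e"
    unfolding bfun_def vfun_def e_def using r
    by (simp add: powr_mult r_def rad_squared pullback_def)
  also have "\<dots> = r * exp (- e * pullback n N f w)"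
    using r e by (simp add: powr_powr exp_powr_real mult.commute)
  finally have "(bfun n N f w)\<^sup>2 = r\<^sup>2 * exp ((- 2 * e) * pullback n N f w)"
    by (simp add: power_mult_distrib exp_double[symmetric] power2_eq_square exp_add[symmetric])
  moreover have "- 2 * e = 2 / (real (n + N) - 2)"
    using assms by (simp add: e_def divide_simps)
  ultimately show ?thesis by (simp only: r_def rad_squared)
qed

lemma xpart_coord_shift:
  "xpart n (w(k := w k + s)) = (if k < n then (xpart n w)(k := xpart n w k + s) else xpart n w)"
  unfolding xpart_def by auto

lemma xpart_in_Rvec: "xpart n w \<in> Rvec n"
  unfolding xpart_def Rvec_def by auto

lemma rsq_coord_shift:
  assumes "k < n + N"
  shows "rsq n N (w(k := w k + s)) = rsq n N w + (if k < n then 0 else 2 * s * w k + s\<^sup>2)"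
proof (cases "k < n")
  case True
  then show ?thesis unfolding rsq_def by simp
next
  case False
  then obtain j0 where k: "k = n + j0" "j0 < N"
    using assms by (metis add_diff_inverse_nat nat_add_left_cancel_less)
  have "rsq n N (w(k := w k + s)) = (\<Sum>j<N. (w (n + j))\<^sup>2 + (if j = j0 then 2 * s * w k + s\<^sup>2 else 0))"
    unfolding rsq_def using k by (intro sum.cong) (auto simp: power2_eq_square algebra_simps)
  also have "\<dots> = rsq n N w + (2 * s * w k + s\<^sup>2)"
    using k by (simp add: sum.distrib rsq_def)
  finally show ?thesis using False by simp
qed

lemma rsq_coord_deriv:
  "k < n + N \<Longrightarrow>
    ((\<lambda>s. rsq n N (w(k := w k + s))) has_real_derivative (if k < n then 0 else 2 * w k)) (at 0)"
  by (simp add: rsq_coord_shift) (auto intro!: derivative_eq_intros)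

lemma rsq_pos_near:
  assumes "0 < rsq n N w" "k < n + N"
  shows "\<forall>\<^sub>F s in nhds 0. 0 < rsq n N (w(k := w k + s))"
proof -
  define g where "g = (\<lambda>s. rsq n N (w(k := w k + s)))"
  have "isCont g 0"
    unfolding g_def using rsq_coord_deriv[OF assms(2)] by (rule DERIV_isCont)
  then have "(g \<longlongrightarrow> g 0) (nhds 0)"
    by (simp add: isCont_def tendsto_at_iff_tendsto_nhds)
  moreover have "g 0 = rsq n N w" by (simp add: g_def)
  ultimately show ?thesis
    using order_tendstoD(1)[of g "rsq n N w" "nhds 0" 0] assms(1) by (simp add: g_def)
qed

lemma coord_deriv:
  "((\<lambda>s. (w(k := w k + s)) l) has_real_derivative (if k = l then 1 else 0)) (at 0)"
  by (auto intro!: derivative_eq_intros)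

lemma all_partials_existD:
  assumes "all_partials_exist n f" "list_all (dir_ok n) (d # ds)" "x \<in> Rvec n" "0 < t"
  shows "case d of DX i \<Rightarrow> (\<lambda>s. pd ds f (x(i := x i + s)) t) differentiable (at 0)
           | DT \<Rightarrow> (\<lambda>s. pd ds f x s) differentiable (at t)"
  using assms unfolding all_partials_exist_def by blast

lemma pd_x_deriv:
  assumes "all_partials_exist n f" "list_all (dir_ok n) ds" "x \<in> Rvec n" "0 < t" "i < n"
  shows "((\<lambda>s. pd ds f (x(i := x i + s)) t) has_real_derivative pd (DX i # ds) f x t) (at 0)"
proof -
  have "(\<lambda>s. pd ds f (x(i := x i + s)) t) differentiable (at 0)"
    using all_partials_existD[of n f "DX i" ds x t] assms by (simp add: dir_ok_def)
  then show ?thesis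
    by (simp add: DERIV_deriv_iff_real_differentiable[symmetric] pdx_def)
qed

lemma pd_t_deriv:
  assumes "all_partials_exist n f" "list_all (dir_ok n) ds" "x \<in> Rvec n" "0 < t"
  shows "((\<lambda>s. pd ds f x s) has_real_derivative pd (DT # ds) f x t) (at t)"
proof -
  have "(\<lambda>s. pd ds f x s) differentiable (at t)"
    using all_partials_existD[of n f DT ds x t] assms by (simp add: dir_ok_def)
  then show ?thesis
    by (simp add: DERIV_deriv_iff_real_differentiable[symmetric] pdt_def)
qed

lemma pullback_coord_deriv:
  assumes f: "all_partials_exist n f" and ds: "list_all (dir_ok n) ds"
    and w: "0 < rsq n N w" and k: "k < n + N"
  shows "((\<lambda>s. pullback n N (pd ds f) (w(k := w k + s))) has_real_derivative
           pullback_pd n N ds f k w) (at 0)"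
proof -
  have N: "0 < N" using rsq_pos_imp_pos[OF w] .
  define t where "t = (\<lambda>s. (rsq n N w + (if k < n then 0 else 2 * s * w k + s\<^sup>2)) / (2 * real N))"
  have t0: "0 < t 0" using w N by (simp add: t_def)
  have shift: "(\<lambda>s. pullback n N (pd ds f) (w(k := w k + s))) =
      (\<lambda>s. pd ds f (if k < n then (xpart n w)(k := xpart n w k + s) else xpart n w) (t s))"
    unfolding pullback_def t_def using k by (simp add: xpart_coord_shift rsq_coord_shift)
  show ?thesis
  proof (cases "k < n")
    case True
    then have "t = (\<lambda>s. t 0)" by (simp add: t_def)
    then show ?thesis
      using pd_x_deriv[OF f ds xpart_in_Rvec t0 True] True unfolding shift
      by (simp add: pullback_pd_def pullback_def t_def xpart_def)
  next
    case False
    have "(t has_real_derivative w k / real N) (at 0)"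
      unfolding t_def using False N by (auto intro!: derivative_eq_intros)
    from DERIV_chain2[OF pd_t_deriv[OF f ds xpart_in_Rvec t0] this]
    show ?thesis
      using False unfolding shift by (simp add: pullback_pd_def pullback_def t_def mult.commute)
  qed
qed

lemma pullback_pd_coord_deriv:
  assumes f: "all_partials_exist n f" and ds: "list_all (dir_ok n) ds"
    and w: "0 < rsq n N w" and k: "k < n + N" and l: "l < n + N"
  shows "((\<lambda>s. pullback_pd n N ds f l (w(k := w k + s))) has_real_derivative
           pullback_pd2 n N ds f k l w) (at 0)"
proof (cases "l < n")
  case True
  then show ?thesis
    using pullback_coord_deriv[OF f _ w k, of "DX l # ds"] ds
    by (simp add: pullback_pd_def pullback_pd2_def dir_ok_def)
next
  case False
  have ds': "list_all (dir_ok n) (DT # ds)" using ds by (simp add: dir_ok_def)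
  have "(\<lambda>s. pullback_pd n N ds f l (w(k := w k + s))) =
      (\<lambda>s. (w(k := w k + s)) l / real N * pullback n N (pd (DT # ds) f) (w(k := w k + s)))"
    using False by (simp add: pullback_pd_def)
  moreover have "pullback_pd2 n N ds f k l w =
      (if k = l then 1 else 0) / real N * pullback n N (pd (DT # ds) f) w
        + (w(k := w k + 0)) l / real N * pullback_pd n N (DT # ds) f k w"
    using False by (simp add: pullback_pd2_def)
  ultimately show ?thesis
    using DERIV_mult[OF DERIV_cdivide[OF coord_deriv[of w k l], of "real N"]
        pullback_coord_deriv[OF f ds' w k]] by (simp add: ac_simps)
qed

section \<open>The Hessian of the squared conformal factor\<close>

lemma pdz_eqI: "((\<lambda>s. g (z(k := z k + s))) has_real_derivative D) (at 0) \<Longrightarrow> pdz k g z = D"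
  unfolding pdz_def by (rule DERIV_imp_deriv)

lemma hessz_mul_exp:
  fixes r \<phi> r' \<phi>' :: "(nat \<Rightarrow> real) \<Rightarrow> real"
  assumes near: "\<forall>\<^sub>F s in nhds 0. P (z(k := z k + s))"
    and r_l: "\<And>w. P w \<Longrightarrow> ((\<lambda>s. r (w(l := w l + s))) has_real_derivative r' w) (at 0)"
    and \<phi>_l: "\<And>w. P w \<Longrightarrow> ((\<lambda>s. \<phi> (w(l := w l + s))) has_real_derivative \<phi>' w) (at 0)"
    and r_k: "((\<lambda>s. r (z(k := z k + s))) has_real_derivative rk) (at 0)"
    and \<phi>_k: "((\<lambda>s. \<phi> (z(k := z k + s))) has_real_derivative \<phi>k) (at 0)"
    and r_kl: "((\<lambda>s. r' (z(k := z k + s))) has_real_derivative rkl) (at 0)"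
    and \<phi>_kl: "((\<lambda>s. \<phi>' (z(k := z k + s))) has_real_derivative \<phi>kl) (at 0)"
  shows "hessz (\<lambda>w. r w * exp (a * \<phi> w)) z k l =
    exp (a * \<phi> z) * (rkl + a * (rk * \<phi>' z + r' z * \<phi>k) + a * r z * (\<phi>kl + a * \<phi>k * \<phi>' z))"
proof -
  define g where "g = (\<lambda>w. exp (a * \<phi> w) * (r' w + a * r w * \<phi>' w))"
  have "pdz l (\<lambda>w. r w * exp (a * \<phi> w)) w = g w" if "P w" for w
    unfolding g_def
    by (rule pdz_eqI) (auto intro!: derivative_eq_intros r_l[OF that] \<phi>_l[OF that] simp: distrib_left)
  then have near_g: "\<forall>\<^sub>F s in nhds 0. pdz l (\<lambda>w. r w * exp (a * \<phi> w)) (z(k := z k + s)) = g (z(k := z k + s))"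
    using near by (auto elim: eventually_mono)
  have g_deriv: "((\<lambda>s. g (z(k := z k + s))) has_real_derivative
      exp (a * \<phi> z) * (rkl + a * (rk * \<phi>' z + r' z * \<phi>k) + a * r z * (\<phi>kl + a * \<phi>k * \<phi>' z))) (at 0)"
  proof -
    define R \<Phi> R' \<Phi>' where "R = (\<lambda>s. r (z(k := z k + s)))" and "\<Phi> = (\<lambda>s. \<phi> (z(k := z k + s)))"
      and "R' = (\<lambda>s. r' (z(k := z k + s)))" and "\<Phi>' = (\<lambda>s. \<phi>' (z(k := z k + s)))"
    have "(R has_real_derivative rk) (at 0)" "(\<Phi> has_real_derivative \<phi>k) (at 0)"
      "(R' has_real_derivative rkl) (at 0)" "(\<Phi>' has_real_derivative \<phi>kl) (at 0)"
      using r_k \<phi>_k r_kl \<phi>_kl by (simp_all add: R_def \<Phi>_def R'_def \<Phi>'_def)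
    then have "((\<lambda>s. exp (a * \<Phi> s) * (R' s + a * R s * \<Phi>' s)) has_real_derivative
      exp (a * \<Phi> 0) * (rkl + a * (rk * \<Phi>' 0 + R' 0 * \<phi>k) + a * R 0 * (\<phi>kl + a * \<phi>k * \<Phi>' 0))) (at 0)"
      by (auto intro!: derivative_eq_intros simp: algebra_simps)
    then show ?thesis by (simp add: g_def R_def \<Phi>_def R'_def \<Phi>'_def)
  qed
  show ?thesis
    using g_deriv unfolding hessz_def by (intro pdz_eqI) (use DERIV_cong_ev[OF refl near_g refl] in blast)
qed

lemma hessz_rsq_exp_pullback:
  assumes f: "all_partials_exist n f" and z: "0 < rsq n N z" and k: "k < n + N" and l: "l < n + N"
  shows "hessz (\<lambda>w. rsq n N w * exp (a * pullback n N f w)) z k l =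
    exp (a * pullback n N f z) *
      ((if k = l \<and> n \<le> l then 2 else 0)
       + a * ((if k < n then 0 else 2 * z k) * pullback_pd n N [] f l z
              + (if l < n then 0 else 2 * z l) * pullback_pd n N [] f k z)
       + a * rsq n N z * (pullback_pd2 n N [] f k l z
              + a * pullback_pd n N [] f k z * pullback_pd n N [] f l z))"
proof -
  have pullback_deriv: "((\<lambda>s. pullback n N f (w(j := w j + s))) has_real_derivative
      pullback_pd n N [] f j w) (at 0)" if "0 < rsq n N w" "j < n + N" for w j
    using pullback_coord_deriv[OF f _ that, of "[]"] by simp
  have "((\<lambda>s. if l < n then 0 else 2 * (z(k := z k + s)) l) has_real_derivative
      (if k = l \<and> n \<le> l then 2 else 0)) (at 0)"
    by (cases "l < n"; cases "k = l") (auto intro!: derivative_eq_intros)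
  from hessz_mul_exp[where P = "\<lambda>w. 0 < rsq n N w" and r = "rsq n N" and \<phi> = "pullback n N f"
      and r' = "\<lambda>w. if l < n then 0 else 2 * w l" and \<phi>' = "pullback_pd n N [] f l",
      OF rsq_pos_near[OF z k] rsq_coord_deriv[OF l] pullback_deriv[OF _ l]
      rsq_coord_deriv[OF k] pullback_deriv[OF z k] this pullback_pd_coord_deriv[OF f _ z k l]]
  show ?thesis by (simp add: algebra_simps)
qed

definition block_mat ::
    "nat \<Rightarrow> (nat \<Rightarrow> nat \<Rightarrow> real) \<Rightarrow> (nat \<Rightarrow> real) \<Rightarrow> (nat \<Rightarrow> real) \<Rightarrow> real \<Rightarrow> real
      \<Rightarrow> (nat \<Rightarrow> real) \<Rightarrow> nat \<Rightarrow> nat \<Rightarrow> real" where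
  "block_mat n A \<alpha> \<beta> \<gamma> \<nu> y k l =
     (if k < n \<and> l < n then A k l
      else if k < n then \<alpha> k * y l
      else if l < n then \<beta> l * y k
      else (if k = l then \<gamma> else 0) + \<nu> * y k * y l)"

lemma hessz_rsq_exp_pullback_block:
  fixes n N :: nat and f :: "(nat \<Rightarrow> real) \<Rightarrow> real \<Rightarrow> real" and a :: real and z :: "nat \<Rightarrow> real"
  defines "G \<equiv> \<lambda>w. rsq n N w * exp (a * pullback n N f w)"
    and "c \<equiv> real N * a" and "\<tau> \<equiv> rsq n N z / (2 * real N)"
    and "F \<equiv> \<lambda>ds. pullback n N (pd ds f) z"
  assumes f: "all_partials_exist n f" and z: "0 < rsq n N z" and k: "k < n + N" and l: "l < n + N"
  shows "real N / (2 * G z) * hessz G z k l =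
    block_mat n
      (\<lambda>i j. c / 2 * F [DX i, DX j] + c\<^sup>2 / (2 * real N) * F [DX i] * F [DX j])
      (\<lambda>i. c / real N * (F [DX i] / (2 * \<tau>) + c * F [DX i] * F [DT] / (2 * real N) + F [DX i, DT] / 2))
      (\<lambda>i. c / real N * (F [DX i] / (2 * \<tau>) + c * F [DX i] * F [DT] / (2 * real N) + F [DT, DX i] / 2))
      (1 / (2 * \<tau>) + c * F [DT] / (2 * real N))
      (c / (real N)\<^sup>2 * (F [DT] / \<tau> + c * (F [DT])\<^sup>2 / (2 * real N) + F [DT, DT] / 2))
      z k l"
proof -
  have N: "0 < real N" using rsq_pos_imp_pos[OF z] by simp
  show ?thesis
    unfolding G_def hessz_rsq_exp_pullback[OF f z k l] block_mat_def
      pullback_pd2_def pullback_pd_def c_def \<tau>_def F_def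
    using N z by (auto simp: field_simps power2_eq_square)
qed

section \<open>Block matrices with a rank-one perturbation\<close>

lemma sum_lessThan_add_split:
  fixes g :: "nat \<Rightarrow> 'a::comm_monoid_add"
  shows "(\<Sum>k<n + N. g k) = (\<Sum>i<n. g i) + (\<Sum>j<N. g (n + j))"
  by (induction N) (simp_all add: ac_simps)

lemma tracefree_norm2:
  fixes Q :: "nat \<Rightarrow> nat \<Rightarrow> real"
  assumes "0 < m"
  shows "(\<Sum>k<m. \<Sum>l<m. (Q k l - (if k = l then (\<Sum>i<m. Q i i) / real m else 0))\<^sup>2)
       = (\<Sum>k<m. \<Sum>l<m. (Q k l)\<^sup>2) - (\<Sum>i<m. Q i i)\<^sup>2 / real m"
proof -
  define t where "t = (\<Sum>i<m. Q i i) / real m"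
  have row: "(\<Sum>l<m. (Q k l - (if k = l then t else 0))\<^sup>2)
      = (\<Sum>l<m. (Q k l)\<^sup>2) - 2 * t * Q k k + t\<^sup>2" if "k < m" for k
  proof -
    have "(\<Sum>l<m. (Q k l - (if k = l then t else 0))\<^sup>2)
        = (\<Sum>l<m. (Q k l)\<^sup>2 + (if l = k then t\<^sup>2 - 2 * t * Q k k else 0))"
      by (rule sum.cong) (auto simp: power2_eq_square algebra_simps)
    then show ?thesis using that by (simp add: sum.distrib)
  qed
  have "(\<Sum>k<m. \<Sum>l<m. (Q k l - (if k = l then t else 0))\<^sup>2)
      = (\<Sum>k<m. \<Sum>l<m. (Q k l)\<^sup>2) - 2 * t * (\<Sum>i<m. Q i i) + real m * t\<^sup>2"
    by (simp add: row sum.distrib sum_subtractf sum_distrib_left)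
  also have "\<dots> = (\<Sum>k<m. \<Sum>l<m. (Q k l)\<^sup>2) - (\<Sum>i<m. Q i i)\<^sup>2 / real m"
    using assms by (simp add: t_def field_simps power2_eq_square)
  finally show ?thesis unfolding t_def .
qed

lemma block_mat_diff:
  "block_mat n A \<alpha> \<beta> \<gamma> \<nu> y k l - block_mat n A' \<alpha>' \<beta>' \<gamma>' \<nu>' y k l
     = block_mat n (\<lambda>i j. A i j - A' i j) (\<lambda>i. \<alpha> i - \<alpha>' i) (\<lambda>i. \<beta> i - \<beta>' i) (\<gamma> - \<gamma>') (\<nu> - \<nu>') y k l"
  unfolding block_mat_def by (auto simp: algebra_simps)

lemma block_mat_trace:
  "(\<Sum>k<n + N. block_mat n A \<alpha> \<beta> \<gamma> \<nu> y k k) = (\<Sum>i<n. A i i) + real N * \<gamma> + \<nu> * rsq n N y"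
  unfolding sum_lessThan_add_split
  by (simp add: block_mat_def rsq_def sum.distrib sum_distrib_left power2_eq_square mult.assoc)

lemma block_mat_norm2:
  "(\<Sum>k<n + N. \<Sum>l<n + N. (block_mat n A \<alpha> \<beta> \<gamma> \<nu> y k l)\<^sup>2)
     = (\<Sum>i<n. \<Sum>j<n. (A i j)\<^sup>2) + rsq n N y * (\<Sum>i<n. (\<alpha> i)\<^sup>2) + rsq n N y * (\<Sum>i<n. (\<beta> i)\<^sup>2)
       + real N * \<gamma>\<^sup>2 + 2 * \<gamma> * (\<nu> * rsq n N y) + (\<nu> * rsq n N y)\<^sup>2"
proof -
  define s where "s = rsq n N y"
  have xy: "(\<Sum>i<n. \<Sum>j<N. (\<alpha> i * y (n + j))\<^sup>2) = s * (\<Sum>i<n. (\<alpha> i)\<^sup>2)"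
    by (simp add: s_def rsq_def power_mult_distrib sum_product mult.commute)
  have yx: "(\<Sum>j<N. \<Sum>i<n. (\<beta> i * y (n + j))\<^sup>2) = s * (\<Sum>i<n. (\<beta> i)\<^sup>2)"
    by (simp add: s_def rsq_def power_mult_distrib sum_product mult.commute) (rule sum.swap)
  have yy_row: "(\<Sum>j'<N. ((if j = j' then \<gamma> else 0) + \<nu> * y (n + j) * y (n + j'))\<^sup>2)
      = \<gamma>\<^sup>2 + 2 * \<gamma> * \<nu> * (y (n + j))\<^sup>2 + \<nu>\<^sup>2 * (y (n + j))\<^sup>2 * s" if "j < N" for j
  proof -
    have "(\<Sum>j'<N. ((if j = j' then \<gamma> else 0) + \<nu> * y (n + j) * y (n + j'))\<^sup>2)
        = (\<Sum>j'<N. (if j' = j then \<gamma>\<^sup>2 + 2 * \<gamma> * \<nu> * (y (n + j))\<^sup>2 else 0)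
              + \<nu>\<^sup>2 * (y (n + j))\<^sup>2 * (y (n + j'))\<^sup>2)"
      by (rule sum.cong) (auto simp: power2_eq_square algebra_simps)
    then show ?thesis
      using that by (simp add: sum.distrib s_def rsq_def sum_distrib_left)
  qed
  have yy: "(\<Sum>j<N. \<Sum>j'<N. ((if j = j' then \<gamma> else 0) + \<nu> * y (n + j) * y (n + j'))\<^sup>2)
      = real N * \<gamma>\<^sup>2 + 2 * \<gamma> * (\<nu> * s) + (\<nu> * s)\<^sup>2"
  proof -
    have "(\<Sum>j<N. \<Sum>j'<N. ((if j = j' then \<gamma> else 0) + \<nu> * y (n + j) * y (n + j'))\<^sup>2)
        = (\<Sum>j<N. \<gamma>\<^sup>2 + 2 * \<gamma> * \<nu> * (y (n + j))\<^sup>2 + \<nu>\<^sup>2 * (y (n + j))\<^sup>2 * s)"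
      by (rule sum.cong) (simp_all add: yy_row)
    also have "\<dots> = real N * \<gamma>\<^sup>2 + 2 * \<gamma> * \<nu> * s + \<nu>\<^sup>2 * s * s"
      unfolding sum.distrib by (simp add: s_def rsq_def flip: sum_distrib_left sum_distrib_right)
    finally show ?thesis by (simp add: power2_eq_square)
  qed
  have "(\<Sum>k<n + N. \<Sum>l<n + N. (block_mat n A \<alpha> \<beta> \<gamma> \<nu> y k l)\<^sup>2)
      = (\<Sum>i<n. \<Sum>j<n. (A i j)\<^sup>2) + (\<Sum>i<n. \<Sum>j<N. (\<alpha> i * y (n + j))\<^sup>2)
        + (\<Sum>j<N. \<Sum>i<n. (\<beta> i * y (n + j))\<^sup>2)
        + (\<Sum>j<N. \<Sum>j'<N. ((if j = j' then \<gamma> else 0) + \<nu> * y (n + j) * y (n + j'))\<^sup>2)"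
    unfolding sum_lessThan_add_split sum.distrib by (simp add: block_mat_def)
  then show ?thesis
    unfolding xy yx yy s_def by simp
qed

lemma abs_coord_le_sqrt_rsq:
  assumes "n \<le> k" "k < n + N"
  shows "\<bar>y k\<bar> \<le> sqrt (rsq n N y)"
proof -
  obtain j where j: "k = n + j" "j < N"
    using assms by (metis add_less_cancel_left le_add_diff_inverse)
  have "(y (n + j))\<^sup>2 \<le> rsq n N y"
    unfolding rsq_def using j(2) by (intro member_le_sum) auto
  then show ?thesis
    using j(1) by (intro real_le_rsqrt) simp
qed

lemma perturbed_norm2_approx:
  fixes L D :: "nat \<Rightarrow> nat \<Rightarrow> real"
  assumes K: "1 \<le> K" "real n \<le> K" and N: "0 < N"
    and L: "\<And>i j. i < n \<Longrightarrow> j < n \<Longrightarrow> \<bar>L i j\<bar> \<le> K"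
    and D: "\<And>i j. i < n \<Longrightarrow> j < n \<Longrightarrow> \<bar>D i j\<bar> \<le> K / real N"
  shows "\<bar>(\<Sum>i<n. \<Sum>j<n. (L i j + D i j)\<^sup>2) - (\<Sum>i<n. \<Sum>j<n. (L i j)\<^sup>2)\<bar> \<le> 3 * K ^ 4 / real N"
proof -
  have "K / real N \<le> K / 1" using K N by (intro divide_left_mono) auto
  then have entry: "\<bar>(L i j + D i j)\<^sup>2 - (L i j)\<^sup>2\<bar> \<le> K / real N * (3 * K)" if "i < n" "j < n" for i j
  proof -
    have "\<bar>(L i j + D i j)\<^sup>2 - (L i j)\<^sup>2\<bar> = \<bar>D i j\<bar> * \<bar>2 * L i j + D i j\<bar>"
      by (simp add: power2_eq_square algebra_simps flip: abs_mult)
    also have "\<dots> \<le> K / real N * (3 * K)"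
      using L[OF that] D[OF that] \<open>K / real N \<le> K / 1\<close> by (intro mult_mono) auto
    finally show ?thesis .
  qed
  have "\<bar>\<Sum>i<n. \<Sum>j<n. (L i j + D i j)\<^sup>2 - (L i j)\<^sup>2\<bar> \<le> real n * (real n * (K / real N * (3 * K)))"
    using entry by (intro abs_sum_lessThan_le) simp
  also have "\<dots> \<le> K * (K * (K / real N * (3 * K)))"
    using K N by (intro mult_mono) auto
  also have "\<dots> = 3 * K ^ 4 / real N"
    by (simp add: power4_eq_xxxx)
  finally show ?thesis
    by (simp add: sum_subtractf)
qed

context
  fixes n N :: nat and K :: real and y \<alpha> \<beta> :: "nat \<Rightarrow> real" and \<gamma> \<nu> :: real
  assumes K: "1 \<le> K" and N: "0 < N" and rsq_le: "rsq n N y \<le> K * real N"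
    and \<alpha>: "\<And>i. i < n \<Longrightarrow> \<bar>\<alpha> i\<bar> \<le> K / real N" and \<beta>: "\<And>i. i < n \<Longrightarrow> \<bar>\<beta> i\<bar> \<le> K / real N"
    and \<gamma>: "\<bar>\<gamma>\<bar> \<le> K / real N" and \<nu>: "\<bar>\<nu> * rsq n N y\<bar> \<le> K / real N"
begin

lemma block_mat_entry_bound:
  assumes D: "\<And>i j. i < n \<Longrightarrow> j < n \<Longrightarrow> \<bar>D i j\<bar> \<le> K / real N"
    and k: "k < n + N" and l: "l < n + N"
  shows "\<bar>block_mat n D \<alpha> \<beta> \<gamma> \<nu> y k l\<bar>
           \<le> (if (k < n) = (l < n) then 2 * K / real N else K\<^sup>2 / sqrt (real N))"
proof -
  have sqrtN: "0 < sqrt (real N)" using N by simp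
  have off: "\<bar>a * y j\<bar> \<le> K\<^sup>2 / sqrt (real N)" if a: "\<bar>a\<bar> \<le> K / real N" and j: "n \<le> j" "j < n + N" for a j
  proof -
    have "\<bar>y j\<bar> \<le> sqrt K * sqrt (real N)"
      using abs_coord_le_sqrt_rsq[OF j, of y] real_sqrt_le_mono[OF rsq_le]
      by (simp add: real_sqrt_mult)
    then have "\<bar>a * y j\<bar> \<le> K / real N * (sqrt K * sqrt (real N))"
      unfolding abs_mult using a by (intro mult_mono) auto
    also have "\<dots> = K * sqrt K * (sqrt (real N) / real N)"
      by simp
    also have "sqrt (real N) / real N = 1 / sqrt (real N)"
      using sqrtN by (simp add: field_simps)
    also have "K * sqrt K * (1 / sqrt (real N)) = K * sqrt K / sqrt (real N)"
      by simp
    also have "\<dots> \<le> K\<^sup>2 / sqrt (real N)"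
    proof -
      have "sqrt K \<le> sqrt (K * K)"
        using K by (intro real_sqrt_le_mono) (simp add: mult_le_cancel_left1)
      then show ?thesis
        using K sqrtN by (intro divide_right_mono) (auto simp: power2_eq_square)
    qed
    finally show ?thesis .
  qed
  have diag: "\<bar>(if k = l then \<gamma> else 0) + \<nu> * y k * y l\<bar> \<le> 2 * K / real N" if "n \<le> k" "n \<le> l"
  proof -
    have "\<bar>y k * y l\<bar> \<le> sqrt (rsq n N y) * sqrt (rsq n N y)"
      unfolding abs_mult using that k l
      by (intro mult_mono abs_coord_le_sqrt_rsq) (auto simp: rsq_nonneg)
    then have "\<bar>\<nu> * y k * y l\<bar> \<le> \<bar>\<nu> * rsq n N y\<bar>"
      by (simp add: abs_mult mult.assoc rsq_nonneg mult_left_mono)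
    then show ?thesis using \<gamma> \<nu> by (auto simp: abs_if split: if_splits)
  qed
  show ?thesis
    using D[of k l] off[OF \<alpha>[of k], of l] off[OF \<beta>[of l], of k] diag k l K N
    by (auto simp: block_mat_def divide_right_mono)
qed

lemma rank_one_block_norm2_bound:
  assumes n: "real n \<le> K" and g: "\<And>i. i < n \<Longrightarrow> \<bar>g i\<bar> \<le> K / real N"
  shows "rsq n N y * (\<Sum>i<n. (g i)\<^sup>2) \<le> K ^ 4 / real N"
proof -
  have "(\<Sum>i<n. (g i)\<^sup>2) \<le> real n * (K / real N)\<^sup>2"
    using sum_bounded_above[of "{..<n}" "\<lambda>i. (g i)\<^sup>2" "(K / real N)\<^sup>2"] g
    by (simp add: square_le_of_abs_le)
  also have "\<dots> \<le> K * (K / real N)\<^sup>2"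
    using n by (intro mult_right_mono) auto
  finally have "rsq n N y * (\<Sum>i<n. (g i)\<^sup>2) \<le> (K * real N) * (K * (K / real N)\<^sup>2)"
    using rsq_le K N by (intro mult_mono) (auto simp: sum_nonneg rsq_nonneg)
  also have "\<dots> = K ^ 4 / real N"
    using N by (simp add: field_simps power2_eq_square power4_eq_xxxx)
  finally show ?thesis .
qed

lemma yy_block_norm2_bound:
  "\<bar>real N * \<gamma>\<^sup>2 + 2 * \<gamma> * (\<nu> * rsq n N y) + (\<nu> * rsq n N y)\<^sup>2\<bar> \<le> 4 * K ^ 4 / real N"
proof -
  define \<epsilon> where "\<epsilon> = K / real N"
  have \<epsilon>: "0 \<le> \<epsilon>" "\<epsilon> \<le> K" "real N * \<epsilon> = K"
    using K N by (auto simp: \<epsilon>_def field_simps)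
  have "real N * \<gamma>\<^sup>2 \<le> real N * \<epsilon>\<^sup>2"
    using \<gamma> by (intro mult_left_mono square_le_of_abs_le) (simp_all add: \<epsilon>_def)
  then have "real N * \<gamma>\<^sup>2 \<le> K * \<epsilon>"
    using \<epsilon>(3) by (simp add: power2_eq_square mult.assoc[symmetric])
  then have "\<bar>real N * \<gamma>\<^sup>2\<bar> \<le> K * \<epsilon>" by (simp add: abs_mult)
  moreover have "\<bar>2 * \<gamma> * (\<nu> * rsq n N y)\<bar> \<le> 2 * (\<epsilon> * \<epsilon>)"
    using mult_mono[OF \<gamma> \<nu>] \<epsilon>(1) by (simp add: abs_mult \<epsilon>_def)
  moreover have "\<bar>(\<nu> * rsq n N y)\<^sup>2\<bar> \<le> \<epsilon> * \<epsilon>"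
    using square_le_of_abs_le[OF \<nu>] by (simp add: \<epsilon>_def power2_eq_square)
  ultimately have "\<bar>real N * \<gamma>\<^sup>2 + 2 * \<gamma> * (\<nu> * rsq n N y) + (\<nu> * rsq n N y)\<^sup>2\<bar>
      \<le> K * \<epsilon> + 2 * (\<epsilon> * \<epsilon>) + \<epsilon> * \<epsilon>"
    by (rule abs_add3_le)
  moreover have "\<epsilon> * \<epsilon> \<le> K * \<epsilon>" using \<epsilon> by (intro mult_right_mono) auto
  moreover have "K * \<epsilon> \<le> K ^ 4 / real N"
    using le_square_le_cube[OF K] power_increasing[of 3 4 K] K
    by (simp add: \<epsilon>_def divide_right_mono power2_eq_square)
  ultimately show ?thesis by linarith
qed

lemma block_mat_trace_bound:
  assumes n: "real n \<le> K" and L: "\<And>i j. i < n \<Longrightarrow> j < n \<Longrightarrow> \<bar>L i j\<bar> \<le> K"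
    and D: "\<And>i j. i < n \<Longrightarrow> j < n \<Longrightarrow> \<bar>D i j\<bar> \<le> K / real N"
  shows "\<bar>\<Sum>i<n + N. block_mat n (\<lambda>i j. L i j + D i j) \<alpha> \<beta> \<gamma> \<nu> y i i\<bar> \<le> 4 * K\<^sup>2"
proof -
  have KN: "K / real N \<le> K" using K N by (simp add: divide_le_eq mult_le_cancel_left1)
  have "\<bar>\<Sum>i<n. L i i + D i i\<bar> \<le> real n * (K + K)"
  proof (intro abs_sum_lessThan_le)
    fix i assume "i < n"
    then show "\<bar>L i i + D i i\<bar> \<le> K + K"
      using L[of i i] D[of i i] KN by linarith
  qed
  also have "\<dots> \<le> K * (2 * K)" using n K by (intro mult_mono) auto
  moreover have "\<bar>real N * \<gamma>\<bar> \<le> K"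
    using mult_left_mono[OF \<gamma>, of "real N"] N by (simp add: abs_mult)
  moreover have "K \<le> K * K" using le_square_le_cube[OF K] by simp
  ultimately have "\<bar>(\<Sum>i<n. L i i + D i i) + real N * \<gamma> + \<nu> * rsq n N y\<bar> \<le> 4 * (K * K)"
    using \<nu> KN unfolding abs_le_iff by linarith
  then show ?thesis
    unfolding block_mat_trace by (simp add: power2_eq_square)
qed

lemma block_mat_tracefree_norm2_approx:
  assumes n: "real n \<le> K" and L: "\<And>i j. i < n \<Longrightarrow> j < n \<Longrightarrow> \<bar>L i j\<bar> \<le> K"
    and D: "\<And>i j. i < n \<Longrightarrow> j < n \<Longrightarrow> \<bar>D i j\<bar> \<le> K / real N"
  defines "P \<equiv> block_mat n (\<lambda>i j. L i j + D i j) \<alpha> \<beta> \<gamma> \<nu> y"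
  shows "\<bar>(\<Sum>k<n + N. \<Sum>l<n + N. (P k l)\<^sup>2) - (\<Sum>i<n + N. P i i)\<^sup>2 / real (n + N)
           - (\<Sum>i<n. \<Sum>j<n. (L i j)\<^sup>2)\<bar> \<le> 25 * K ^ 4 / real N"
proof -
  have "(\<Sum>i<n + N. P i i)\<^sup>2 \<le> (4 * K\<^sup>2)\<^sup>2"
    unfolding P_def by (intro square_le_of_abs_le block_mat_trace_bound n L D)
  then have trace: "(\<Sum>i<n + N. P i i)\<^sup>2 / real (n + N) \<le> 16 * K ^ 4 / real N"
    using N by (intro frac_le) (auto simp: power_mult_distrib)
  have "0 \<le> rsq n N y * (\<Sum>i<n. (\<alpha> i)\<^sup>2)" "0 \<le> rsq n N y * (\<Sum>i<n. (\<beta> i)\<^sup>2)"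
    "0 \<le> (\<Sum>i<n + N. P i i)\<^sup>2 / real (n + N)"
    by (simp_all add: sum_nonneg rsq_nonneg)
  then show ?thesis
    using perturbed_norm2_approx[where L = L and D = D, OF K n N L D] yy_block_norm2_bound trace
      rank_one_block_norm2_bound[where g = \<alpha>, OF n \<alpha>] rank_one_block_norm2_bound[where g = \<beta>, OF n \<beta>]
    unfolding P_def block_mat_norm2 abs_le_iff by linarith
qed

end

lemma conformal_factor_bounds:
  fixes n N :: nat
  assumes "1 \<le> n" "3 \<le> N"
  defines "c \<equiv> real N * (2 / (real (n + N) - 2))"
  shows "0 \<le> c" "c \<le> 3" "\<bar>c / 2 - 1\<bar> \<le> 2 * real n / real N"
proof -
  have m: "0 < real (n + N) - 2" using assms by simp
  show "0 \<le> c" using m by (simp add: c_def)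
  show "c \<le> 3" using m assms by (simp add: c_def field_simps)
  have "c / 2 - 1 = (2 - real n) / (real (n + N) - 2)"
    using m by (simp add: c_def field_simps)
  also have "\<bar>\<dots>\<bar> \<le> real n / (real N / 2)"
    unfolding abs_divide using m assms by (intro frac_le) auto
  finally show "\<bar>c / 2 - 1\<bar> \<le> 2 * real n / real N" by simp
qed

context
  fixes K c \<tau> :: real and N :: nat
  assumes K: "1 \<le> K" and N: "3 \<le> N" and c: "0 \<le> c" "c \<le> 3"
    and \<tau>: "0 < \<tau>" "\<tau> \<le> K" "1 / \<tau> \<le> K"
begin

lemma c_div_N: "0 \<le> c / real N" "c / real N \<le> 1"
  using c N by auto

lemma offdiag_coeff_bound:
  assumes p: "\<bar>p\<bar> \<le> K" and q: "\<bar>q\<bar> \<le> K" and r: "\<bar>r\<bar> \<le> K"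
  shows "\<bar>c / real N * (p / (2 * \<tau>) + c * p * q / (2 * real N) + r / 2)\<bar> \<le> 20 * K ^ 3 / real N"
proof -
  have "\<bar>1 / \<tau>\<bar> \<le> K" using \<tau> by simp
  then have "\<bar>p * (1 / \<tau>)\<bar> \<le> K * K" by (rule abs_mult_le[OF p])
  moreover have "\<bar>c / real N\<bar> \<le> 1" using c_div_N by simp
  then have "\<bar>c / real N * (p * q)\<bar> \<le> 1 * (K * K)"
    by (rule abs_mult_le[OF _ abs_mult_le[OF p q]])
  ultimately have "\<bar>p * (1 / \<tau>) + c / real N * (p * q) + r\<bar> \<le> 3 * (K * K)"
    using r le_square_le_cube[OF K] by linarith
  then have "\<bar>c * (p * (1 / \<tau>) + c / real N * (p * q) + r)\<bar> \<le> 3 * (3 * (K * K))"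
    using c by (intro abs_mult_le) auto
  also have "\<dots> \<le> 40 * K ^ 3" using le_square_le_cube[OF K] K by linarith
  finally show ?thesis
    using N by (simp add: field_simps abs_mult abs_divide)
qed

lemma yy_diag_coeff_bound:
  assumes "\<bar>q\<bar> \<le> K"
  shows "\<bar>c * q / (2 * real N)\<bar> \<le> 20 * K ^ 3 / real N"
proof -
  have "\<bar>c * q\<bar> \<le> 3 * K" using c assms by (intro abs_mult_le) auto
  also have "\<dots> \<le> 40 * K ^ 3" using le_square_le_cube[OF K] K by linarith
  finally show ?thesis using N by (simp add: field_simps abs_mult abs_divide)
qed

lemma yy_rank_one_coeff_bound:
  assumes q: "\<bar>q\<bar> \<le> K" and r: "\<bar>r\<bar> \<le> K"
  shows "\<bar>c / (real N)\<^sup>2 * (q / \<tau> + c * q\<^sup>2 / (2 * real N) + r / 2) * (2 * real N * \<tau>)\<bar>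
           \<le> 20 * K ^ 3 / real N"
proof -
  have \<tau>': "\<bar>\<tau>\<bar> \<le> K" using \<tau> by simp
  have "\<bar>c / real N\<bar> \<le> 1" using c_div_N by simp
  then have "\<bar>c / real N * (\<tau> * (q * q))\<bar> \<le> 1 * (K * (K * K))"
    by (rule abs_mult_le[OF _ abs_mult_le[OF \<tau>' abs_mult_le[OF q q]]])
  then have "\<bar>c / real N * (\<tau> * (q * q))\<bar> \<le> K ^ 3" by (simp add: power3_eq_cube)
  moreover have "\<bar>\<tau> * r\<bar> \<le> K * K" by (rule abs_mult_le[OF \<tau>' r])
  moreover have "\<bar>2 * q\<bar> \<le> 2 * K" using q by simp
  ultimately have "\<bar>2 * q + c / real N * (\<tau> * (q * q)) + \<tau> * r\<bar> \<le> 2 * K + K ^ 3 + K * K"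
    by (intro abs_add3_le)
  also have "\<dots> \<le> 4 * K ^ 3" using le_square_le_cube[OF K] by linarith
  finally have "\<bar>2 * q + c / real N * (\<tau> * (q * q)) + \<tau> * r\<bar> \<le> 4 * K ^ 3" .
  then have "\<bar>c * (2 * q + c / real N * (\<tau> * (q * q)) + \<tau> * r)\<bar> \<le> 3 * (4 * K ^ 3)"
    using c by (intro abs_mult_le) auto
  also have "\<dots> \<le> 20 * K ^ 3" using le_square_le_cube[OF K] K by linarith
  finally have "\<bar>c * (2 * q + c / real N * (\<tau> * (q * q)) + \<tau> * r)\<bar> \<le> 20 * K ^ 3" .
  moreover have "c / (real N)\<^sup>2 * (q / \<tau> + c * q\<^sup>2 / (2 * real N) + r / 2) * (2 * real N * \<tau>)
      = c * (2 * q + c / real N * (\<tau> * (q * q)) + \<tau> * r) / real N"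
    using N \<tau> by (simp add: field_simps power2_eq_square)
  ultimately show ?thesis
    using N by (simp add: abs_divide divide_right_mono)
qed

lemma xx_coeff_bound:
  assumes c1: "\<bar>c / 2 - 1\<bar> \<le> 2 * K / real N"
    and p: "\<bar>p\<bar> \<le> K" and q: "\<bar>q\<bar> \<le> K" and r: "\<bar>r\<bar> \<le> K"
  shows "\<bar>c / 2 * p + c\<^sup>2 / (2 * real N) * q * r - p\<bar> \<le> 20 * K ^ 3 / real N"
proof -
  have "\<bar>c / 2 - 1\<bar> * real N \<le> 2 * K / real N * real N"
    using c1 by (rule mult_right_mono) simp
  then have "\<bar>(c / 2 - 1) * real N\<bar> \<le> 2 * K"
    using N by (simp add: abs_mult)
  then have "\<bar>(c / 2 - 1) * real N * p\<bar> \<le> 2 * K * K" by (rule abs_mult_le[OF _ p])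
  moreover have "\<bar>c * c / 2\<bar> \<le> 9 / 2"
    using c mult_mono[OF c(2) c(2)] by simp
  then have "\<bar>c * c / 2 * (q * r)\<bar> \<le> 9 / 2 * (K * K)"
    by (rule abs_mult_le[OF _ abs_mult_le[OF q r]])
  ultimately have "\<bar>(c / 2 - 1) * real N * p + c * c / 2 * (q * r)\<bar> \<le> 20 * K ^ 3"
    using le_square_le_cube[OF K] K by linarith
  moreover have "c / 2 * p + c\<^sup>2 / (2 * real N) * q * r - p
      = ((c / 2 - 1) * real N * p + c * c / 2 * (q * r)) / real N"
    using N by (simp add: field_simps power2_eq_square)
  ultimately show ?thesis
    using N by (simp add: abs_divide divide_right_mono)
qed

end

section \<open>The estimate at a single point\<close>

lemma Bnorm2_eq_tracefree:
  fixes P :: "nat \<Rightarrow> nat \<Rightarrow> real"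
  assumes m: "0 < n + N"
    and H: "\<And>k l. k < n + N \<Longrightarrow> l < n + N \<Longrightarrow>
              hessz (\<lambda>w. (bfun n N f w)\<^sup>2) z k l = \<kappa> * (P k l + (if k = l then d else 0))"
  shows "Bnorm2 n N f z
           = \<kappa>\<^sup>2 * ((\<Sum>k<n + N. \<Sum>l<n + N. (P k l)\<^sup>2) - (\<Sum>i<n + N. P i i)\<^sup>2 / real (n + N))"
proof -
  define tr where "tr = (\<Sum>i<n + N. P i i)"
  have "lapz (n + N) (\<lambda>w. (bfun n N f w)\<^sup>2) z = (\<Sum>k<n + N. \<kappa> * (P k k + d))"
    unfolding lapz_def by (intro sum.cong) (simp_all add: H)
  also have "\<dots> = \<kappa> * (tr + real (n + N) * d)"
    unfolding tr_def sum_distrib_left[symmetric] sum.distrib by simp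
  finally have lap: "lapz (n + N) (\<lambda>w. (bfun n N f w)\<^sup>2) z = \<kappa> * (tr + real (n + N) * d)" .
  have "Bmat n N f z k l = \<kappa> * (P k l - (if k = l then tr / real (n + N) else 0))"
    if "k < n + N" "l < n + N" for k l
    unfolding Bmat_def lap H[OF that] using m by (auto simp: field_simps)
  then have "Bnorm2 n N f z
      = (\<Sum>k<n + N. \<Sum>l<n + N. \<kappa>\<^sup>2 * (P k l - (if k = l then tr / real (n + N) else 0))\<^sup>2)"
    unfolding Bnorm2_def by (intro sum.cong) (simp_all add: power_mult_distrib)
  then show ?thesis
    using tracefree_norm2[OF m, of P] unfolding tr_def by (simp flip: sum_distrib_left)
qed

lemma M0_eq_block_mat:
  "M0 n f x \<tau> k l = block_mat n (\<lambda>i j. pd [DX i, DX j] f x \<tau>) (\<lambda>_. 0) (\<lambda>_. 0) (1 / (2 * \<tau>)) 0 z k l"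
  unfolding M0_def block_mat_def by simp

locale bsq_point =
  fixes n N :: nat and f :: "(nat \<Rightarrow> real) \<Rightarrow> real \<Rightarrow> real" and z :: "nat \<Rightarrow> real" and K \<tau> :: real
  assumes smooth: "all_partials_exist n f" and K: "1 \<le> K" "real n \<le> K" and n: "1 \<le> n" and N: "3 \<le> N"
    and \<tau>_eq: "\<tau> = (rad n N z)\<^sup>2 / (2 * real N)" and \<tau>: "0 < \<tau>" "\<tau> \<le> K" "1 / \<tau> \<le> K"
    and f_bound: "\<And>ds. list_all (dir_ok n) ds \<Longrightarrow> length ds \<le> 2 \<Longrightarrow> \<bar>pd ds f (xpart n z) \<tau>\<bar> \<le> K"
begin

(* c is N a in the notation of the header, and A, \<alpha>, \<beta>, \<gamma>, \<nu> are the blocks of the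
   normalised Hessian of b^2 at z. *)
definition c :: real where "c = real N * (2 / (real (n + N) - 2))"

definition F :: "dir list \<Rightarrow> real" where "F ds = pd ds f (xpart n z) \<tau>"

definition A :: "nat \<Rightarrow> nat \<Rightarrow> real" where
  "A = (\<lambda>i j. c / 2 * F [DX i, DX j] + c\<^sup>2 / (2 * real N) * F [DX i] * F [DX j])"

definition \<alpha> :: "nat \<Rightarrow> real" where
  "\<alpha> = (\<lambda>i. c / real N * (F [DX i] / (2 * \<tau>) + c * F [DX i] * F [DT] / (2 * real N) + F [DX i, DT] / 2))"

definition \<beta> :: "nat \<Rightarrow> real" where
  "\<beta> = (\<lambda>i. c / real N * (F [DX i] / (2 * \<tau>) + c * F [DX i] * F [DT] / (2 * real N) + F [DT, DX i] / 2))"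

definition \<gamma> :: real where "\<gamma> = c * F [DT] / (2 * real N)"

definition \<nu> :: real where
  "\<nu> = c / (real N)\<^sup>2 * (F [DT] / \<tau> + c * (F [DT])\<^sup>2 / (2 * real N) + F [DT, DT] / 2)"

lemma rsq_eq: "rsq n N z = 2 * real N * \<tau>"
  using N by (simp add: \<tau>_eq rad_squared)

lemma bfun_squared_pos: "0 < (bfun n N f z)\<^sup>2"
  using bfun_squared[of n N f z] N rsq_eq \<tau>(1) by simp

lemma normalized_hessz_bsq:
  assumes "k < n + N" "l < n + N"
  shows "real N / (2 * (bfun n N f z)\<^sup>2) * hessz (\<lambda>w. (bfun n N f w)\<^sup>2) z k l
           = block_mat n A \<alpha> \<beta> (1 / (2 * \<tau>) + \<gamma>) \<nu> z k l"
proof -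
  have bsq: "(bfun n N f w)\<^sup>2 = rsq n N w * exp (2 / (real (n + N) - 2) * pullback n N f w)" for w
    using bfun_squared N by simp
  have rsq: "0 < rsq n N z" using rsq_eq N \<tau>(1) by simp
  have F_eq: "pullback n N (pd ds f) z = F ds" for ds
    using N by (simp add: F_def pullback_def rsq_eq)
  have \<tau>_rsq: "rsq n N z / (2 * real N) = \<tau>" using N by (simp add: rsq_eq)
  from hessz_rsq_exp_pullback_block[OF smooth rsq assms, where a = "2 / (real (n + N) - 2)"]
  show ?thesis
    unfolding bsq F_eq \<tau>_rsq A_def \<alpha>_def \<beta>_def \<gamma>_def \<nu>_def c_def .
qed

lemma hessz_bsq:
  assumes "k < n + N" "l < n + N"
  shows "hessz (\<lambda>w. (bfun n N f w)\<^sup>2) z k l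
           = 2 * (bfun n N f z)\<^sup>2 / real N * block_mat n A \<alpha> \<beta> (1 / (2 * \<tau>) + \<gamma>) \<nu> z k l"
  using normalized_hessz_bsq[OF assms] bfun_squared_pos N by (simp add: field_simps)

lemma coefficient_bounds:
  shows "\<And>i j. i < n \<Longrightarrow> j < n \<Longrightarrow> \<bar>F [DX i, DX j] - (if i = j then 1 / (2 * \<tau>) else 0)\<bar> \<le> 20 * K ^ 3"
    and "\<And>i j. i < n \<Longrightarrow> j < n \<Longrightarrow> \<bar>A i j - F [DX i, DX j]\<bar> \<le> 20 * K ^ 3 / real N"
    and "\<And>i. i < n \<Longrightarrow> \<bar>\<alpha> i\<bar> \<le> 20 * K ^ 3 / real N"
    and "\<And>i. i < n \<Longrightarrow> \<bar>\<beta> i\<bar> \<le> 20 * K ^ 3 / real N"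
    and "\<bar>\<gamma>\<bar> \<le> 20 * K ^ 3 / real N"
    and "\<bar>\<nu> * rsq n N z\<bar> \<le> 20 * K ^ 3 / real N"
proof -
  have c: "0 \<le> c" "c \<le> 3" "\<bar>c / 2 - 1\<bar> \<le> 2 * real n / real N"
    using conformal_factor_bounds[OF n N] unfolding c_def by auto
  have c1: "\<bar>c / 2 - 1\<bar> \<le> 2 * K / real N"
    using c(3) K(2) N by (simp add: divide_right_mono order_trans)
  have Fx: "\<bar>F [DX i]\<bar> \<le> K" "\<bar>F [DX i, DT]\<bar> \<le> K" "\<bar>F [DT, DX i]\<bar> \<le> K" if "i < n" for i
    unfolding F_def using f_bound[of "[DX i]"] f_bound[of "[DX i, DT]"] f_bound[of "[DT, DX i]"] that
    by (simp_all add: dir_ok_def)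
  have Fxx: "\<bar>F [DX i, DX j]\<bar> \<le> K" if "i < n" "j < n" for i j
    unfolding F_def using f_bound[of "[DX i, DX j]"] that by (simp add: dir_ok_def)
  have Ft: "\<bar>F [DT]\<bar> \<le> K" "\<bar>F [DT, DT]\<bar> \<le> K"
    unfolding F_def using f_bound[of "[DT]"] f_bound[of "[DT, DT]"] by (simp_all add: dir_ok_def)
  note bounds = offdiag_coeff_bound[OF K(1) N c(1,2) \<tau>] yy_diag_coeff_bound[OF K(1) N c(1,2) \<tau>]
    yy_rank_one_coeff_bound[OF K(1) N c(1,2) \<tau>] xx_coeff_bound[OF K(1) N c(1,2) \<tau> c1]
  show "\<bar>F [DX i, DX j] - (if i = j then 1 / (2 * \<tau>) else 0)\<bar> \<le> 20 * K ^ 3" if "i < n" "j < n" for i j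
  proof -
    have "1 \<le> K * \<tau>" using \<tau> by (simp add: field_simps)
    then have "\<bar>if i = j then 1 / (2 * \<tau>) else 0\<bar> \<le> K" using \<tau> K by (simp add: field_simps)
    then have "\<bar>F [DX i, DX j] - (if i = j then 1 / (2 * \<tau>) else 0)\<bar> \<le> 2 * K"
      using Fxx[OF that] by linarith
    also have "\<dots> \<le> 20 * K ^ 3" using le_square_le_cube[OF K(1)] K by linarith
    finally show ?thesis .
  qed
  show "\<And>i j. i < n \<Longrightarrow> j < n \<Longrightarrow> \<bar>A i j - F [DX i, DX j]\<bar> \<le> 20 * K ^ 3 / real N"
    unfolding A_def using bounds(4) Fxx Fx by blast
  show "\<And>i. i < n \<Longrightarrow> \<bar>\<alpha> i\<bar> \<le> 20 * K ^ 3 / real N" "\<And>i. i < n \<Longrightarrow> \<bar>\<beta> i\<bar> \<le> 20 * K ^ 3 / real N"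
    unfolding \<alpha>_def \<beta>_def using bounds(1) Fx Ft by blast+
  show "\<bar>\<gamma>\<bar> \<le> 20 * K ^ 3 / real N" "\<bar>\<nu> * rsq n N z\<bar> \<le> 20 * K ^ 3 / real N"
    unfolding \<gamma>_def \<nu>_def rsq_eq using bounds(2,3) Ft by blast+
qed

lemma scale_bounds:
  "1 \<le> 20 * K ^ 3" "real n \<le> 20 * K ^ 3" "rsq n N z \<le> 20 * K ^ 3 * real N"
proof -
  have "K \<le> K ^ 3" using power_increasing[of 1 3 K] K by simp
  then have "1 \<le> 20 * K ^ 3" "real n \<le> 20 * K ^ 3" "2 * \<tau> \<le> 20 * K ^ 3"
    using K \<tau> by linarith+
  then show "1 \<le> 20 * K ^ 3" "real n \<le> 20 * K ^ 3" "rsq n N z \<le> 20 * K ^ 3 * real N"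
    unfolding rsq_eq using mult_right_mono[of "2 * \<tau>" "20 * K ^ 3" "real N"] by (simp_all add: mult_ac)
qed

lemma entry_estimate:
  assumes kl: "k < n + N" "l < n + N"
  shows "\<bar>real N / (2 * (bfun n N f z)\<^sup>2) * hessz (\<lambda>w. (bfun n N f w)\<^sup>2) z k l - M0 n f (xpart n z) \<tau> k l\<bar>
           \<le> (if (k < n) = (l < n) then 25 * (20 * K ^ 3) ^ 4 / real N
               else 25 * (20 * K ^ 3) ^ 4 / sqrt (real N))"
proof -
  define K' where "K' = 20 * K ^ 3"
  have "M0 n f (xpart n z) \<tau> k l = block_mat n (\<lambda>i j. F [DX i, DX j]) (\<lambda>_. 0) (\<lambda>_. 0) (1 / (2 * \<tau>)) 0 z k l"
    using M0_eq_block_mat[of n f "xpart n z" \<tau> k l z] by (simp add: F_def)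
  then have "real N / (2 * (bfun n N f z)\<^sup>2) * hessz (\<lambda>w. (bfun n N f w)\<^sup>2) z k l - M0 n f (xpart n z) \<tau> k l
      = block_mat n (\<lambda>i j. A i j - F [DX i, DX j]) \<alpha> \<beta> \<gamma> \<nu> z k l"
    unfolding normalized_hessz_bsq[OF kl] by (simp add: block_mat_diff)
  also have "\<bar>\<dots>\<bar> \<le> (if (k < n) = (l < n) then 2 * K' / real N else K'\<^sup>2 / sqrt (real N))"
    using block_mat_entry_bound[where \<alpha> = \<alpha> and \<beta> = \<beta> and D = "\<lambda>i j. A i j - F [DX i, DX j]",
        OF scale_bounds(1) _ scale_bounds(3) coefficient_bounds(3-6) coefficient_bounds(2) kl] N
    unfolding K'_def by simp
  also have "\<dots> \<le> (if (k < n) = (l < n) then 25 * K' ^ 4 / real N else 25 * K' ^ 4 / sqrt (real N))"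
    using power_increasing[of 1 4 K'] power_increasing[of 2 4 K'] scale_bounds(1) N
    by (simp add: K'_def divide_right_mono)
  finally show ?thesis unfolding K'_def .
qed

lemma norm_estimate:
  "\<bar>Bnorm2 n N f z - 4 * (bfun n N f z) ^ 4 / (real N)\<^sup>2 *
      (\<Sum>i<n. \<Sum>j<n. (pdx i (pdx j f) (xpart n z) \<tau> - (if i = j then 1 / (2 * \<tau>) else 0))\<^sup>2)\<bar>
     \<le> 4 * (bfun n N f z) ^ 4 / (real N)\<^sup>2 * (25 * (20 * K ^ 3) ^ 4 / real N)"
proof -
  define \<kappa> where "\<kappa> = 2 * (bfun n N f z)\<^sup>2 / real N"
  define L where "L = (\<lambda>i j. F [DX i, DX j] - (if i = j then 1 / (2 * \<tau>) else 0))"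
  define P where "P = block_mat n (\<lambda>i j. L i j + (A i j - F [DX i, DX j])) \<alpha> \<beta> \<gamma> \<nu> z"
  have "hessz (\<lambda>w. (bfun n N f w)\<^sup>2) z k l = \<kappa> * (P k l + (if k = l then 1 / (2 * \<tau>) else 0))"
    if "k < n + N" "l < n + N" for k l
    unfolding hessz_bsq[OF that] \<kappa>_def P_def block_mat_def L_def by auto
  then have Bnorm2: "Bnorm2 n N f z
      = \<kappa>\<^sup>2 * ((\<Sum>k<n + N. \<Sum>l<n + N. (P k l)\<^sup>2) - (\<Sum>i<n + N. P i i)\<^sup>2 / real (n + N))"
    using N by (intro Bnorm2_eq_tracefree) auto
  have N0: "0 < N" using N by simp
  have L_bound: "\<bar>L i j\<bar> \<le> 20 * K ^ 3" if "i < n" "j < n" for i j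
    using coefficient_bounds(1)[OF that] by (simp add: L_def)
  have L_sum: "(\<Sum>i<n. \<Sum>j<n. (pdx i (pdx j f) (xpart n z) \<tau> - (if i = j then 1 / (2 * \<tau>) else 0))\<^sup>2)
      = (\<Sum>i<n. \<Sum>j<n. (L i j)\<^sup>2)"
    by (simp add: L_def F_def)
  have "\<bar>Bnorm2 n N f z - \<kappa>\<^sup>2 *
      (\<Sum>i<n. \<Sum>j<n. (pdx i (pdx j f) (xpart n z) \<tau> - (if i = j then 1 / (2 * \<tau>) else 0))\<^sup>2)\<bar>
    = \<kappa>\<^sup>2 * \<bar>(\<Sum>k<n + N. \<Sum>l<n + N. (P k l)\<^sup>2) - (\<Sum>i<n + N. P i i)\<^sup>2 / real (n + N)
        - (\<Sum>i<n. \<Sum>j<n. (L i j)\<^sup>2)\<bar>"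
    unfolding Bnorm2 L_sum by (simp add: abs_mult flip: right_diff_distrib)
  also have "\<dots> \<le> \<kappa>\<^sup>2 * (25 * (20 * K ^ 3) ^ 4 / real N)"
    using block_mat_tracefree_norm2_approx[where \<alpha> = \<alpha> and \<beta> = \<beta> and L = L
        and D = "\<lambda>i j. A i j - F [DX i, DX j]", OF scale_bounds(1) N0 scale_bounds(3)
        coefficient_bounds(3-6) scale_bounds(2) L_bound coefficient_bounds(2), folded P_def]
    by (intro mult_left_mono) simp_all
  finally show ?thesis
    unfolding \<kappa>_def by (simp add: power_divide power_mult_distrib flip: power_mult)
qed

end

section \<open>Uniformity in the point\<close>

lemma finite_family_uniform_bound:
  fixes g :: "'a \<Rightarrow> 'b \<Rightarrow> real"
  assumes "finite S" and "\<And>s. s \<in> S \<Longrightarrow> \<exists>C. \<forall>x\<in>X. \<bar>g s x\<bar> \<le> C"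
  shows "\<exists>C. \<forall>s\<in>S. \<forall>x\<in>X. \<bar>g s x\<bar> \<le> C"
proof -
  obtain C where C: "\<And>s x. s \<in> S \<Longrightarrow> x \<in> X \<Longrightarrow> \<bar>g s x\<bar> \<le> C s"
    using assms(2) by metis
  have "\<bar>g s x\<bar> \<le> (\<Sum>s\<in>S. \<bar>C s\<bar>)" if "s \<in> S" "x \<in> X" for s x
    using C[OF that] member_le_sum[OF that(1), of "\<lambda>s. \<bar>C s\<bar>"] assms(1) by force
  then show ?thesis by blast
qed

lemma finite_dir_lists: "finite {ds. list_all (dir_ok n) ds \<and> length ds \<le> k}"
proof -
  have "set ds \<subseteq> insert DT (DX ` {..<n})" if "list_all (dir_ok n) ds" for ds
  proof
    fix d assume "d \<in> set ds"
    then have "dir_ok n d" using that by (simp add: list_all_iff)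
    then show "d \<in> insert DT (DX ` {..<n})" by (cases d) (auto simp: dir_ok_def)
  qed
  then have "{ds. list_all (dir_ok n) ds \<and> length ds \<le> k}
      \<subseteq> {ds. set ds \<subseteq> insert DT (DX ` {..<n}) \<and> length ds \<le> k}"
    by blast
  then show ?thesis
    by (rule finite_subset) (simp add: finite_lists_length_le)
qed

lemma uniform_bound_on_strip:
  assumes "\<And>ds. list_all (dir_ok n) ds \<Longrightarrow> \<exists>C. \<forall>x\<in>Rvec n. \<forall>t\<in>{\<tau>1..\<tau>2}. \<bar>pd ds f x t\<bar> \<le> C"
  obtains K0 where "\<And>ds x t. list_all (dir_ok n) ds \<Longrightarrow> length ds \<le> 2 \<Longrightarrow> x \<in> Rvec n \<Longrightarrow>
      t \<in> {\<tau>1..\<tau>2} \<Longrightarrow> \<bar>pd ds f x t\<bar> \<le> K0"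
proof -
  have "\<exists>C. \<forall>ds\<in>{ds. list_all (dir_ok n) ds \<and> length ds \<le> 2}. \<forall>(x, t)\<in>Rvec n \<times> {\<tau>1..\<tau>2}.
      \<bar>pd ds f x t\<bar> \<le> C"
    using finite_family_uniform_bound[OF finite_dir_lists, of n 2 "Rvec n \<times> {\<tau>1..\<tau>2}"
        "\<lambda>ds (x, t). pd ds f x t"] assms
    by (force split: prod.splits)
  then show ?thesis using that by blast
qed

theorem lemma3p2:
  fixes n :: nat and u f :: "(nat \<Rightarrow> real) \<Rightarrow> real \<Rightarrow> real" and \<tau>1 \<tau>2 :: real
  assumes n_pos: "n \<ge> 1"
    and tau: "0 < \<tau>1" "\<tau>1 < \<tau>2"
    and smooth: "all_partials_exist n f"
    and u_def: "\<And>x t. x \<in> Rvec n \<Longrightarrow> t > 0 \<Longrightarrow> u x t = t powr (- real n / 2) * exp (- f x t)"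
    and u_pos: "\<And>x t. x \<in> Rvec n \<Longrightarrow> t > 0 \<Longrightarrow> u x t > 0"
    and heat: "\<And>x t. x \<in> Rvec n \<Longrightarrow> t > 0 \<Longrightarrow> pdt u x t = (\<Sum>i<n. pdx i (pdx i u) x t)"
    and bounded: "\<And>ds. list_all (dir_ok n) ds \<Longrightarrow>
                    \<exists>C. \<forall>x\<in>Rvec n. \<forall>t\<in>{\<tau>1..\<tau>2}. \<bar>pd ds f x t\<bar> \<le> C"
  shows "\<exists>C. \<forall>N::nat. \<forall>z \<in> Rvec (n + N).
           N \<ge> 3 \<longrightarrow> (rad n N z)^2 / (2 * real N) \<in> {\<tau>1..\<tau>2} \<longrightarrow>
           (let \<tau> = (rad n N z)^2 / (2 * real N); x = xpart n z; b = bfun n N f z in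
             (\<forall>k<n+N. \<forall>l<n+N.
                \<bar>real N / (2 * b^2) * hessz (\<lambda>w. (bfun n N f w)^2) z k l - M0 n f x \<tau> k l\<bar>
                  \<le> (if (k < n) = (l < n) then C / real N else C / sqrt (real N)))
             \<and> \<bar>Bnorm2 n N f z
                 - 4 * b^4 / (real N)^2 *
                     (\<Sum>i<n. \<Sum>j<n. (pdx i (pdx j f) x \<tau> - (if i = j then 1 / (2 * \<tau>) else 0))^2)\<bar>
                 \<le> 4 * b^4 / (real N)^2 * (C / real N))"
proof -
  obtain K0 where K0: "\<And>ds x t. list_all (dir_ok n) ds \<Longrightarrow> length ds \<le> 2 \<Longrightarrow> x \<in> Rvec n \<Longrightarrow>
      t \<in> {\<tau>1..\<tau>2} \<Longrightarrow> \<bar>pd ds f x t\<bar> \<le> K0"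
    using uniform_bound_on_strip[OF bounded] by blast
  define K where "K = max 1 (max K0 (max (1 / \<tau>1) (max \<tau>2 (real n))))"
  show ?thesis
    apply (intro exI[of _ "25 * (20 * K ^ 3) ^ 4"] allI ballI impI)
    subgoal premises prems for N z
    proof -
      define t where "t = (rad n N z)\<^sup>2 / (2 * real N)"
      have t: "\<tau>1 \<le> t" "t \<le> \<tau>2" using prems(3) by (simp_all add: t_def)
      have "1 / t \<le> 1 / \<tau>1" using t tau by (intro divide_left_mono) auto
      moreover have "\<bar>pd ds f (xpart n z) t\<bar> \<le> K" if "list_all (dir_ok n) ds" "length ds \<le> 2" for ds
        using K0[OF that xpart_in_Rvec[of n z], of t] t by (simp add: K_def)
      ultimately interpret bsq_point n N f z K t
        using smooth n_pos prems(2) t tau by unfold_locales (auto simp: t_def K_def)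
      show ?thesis
        using entry_estimate norm_estimate unfolding Let_def t_def by blast
    qed
    done
qed

end
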